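(* Let $p$ and $q$ be relatively prime positive integers, and let $\omega=e^{i\pi p/q}$ with $\omega\ne1$. Then $$\gamma(\omega)+\frac{\log(1-\omega)}{\omega}=\sum_{j=1}^{q}\omega^{j-1}E_{j,p,q}=\sum_{j=1}^{2q}\omega^{j-1}\log\frac{\Gamma\!\left(\frac{j+1}{2q}\right)}{\Gamma\!\left(\frac{j}{2q}\right)},$$ where $$E_{j,p,q}=\begin{cases}\log\dfrac{\Gamma\left(\frac{j+1}{q}\right)}{\Gamma\left(\frac jq\right)} & \text{if } p \text{ is even},\\[2ex] \log\dfrac{\Gamma\left(\frac{j+1}{2q}\right)\Gamma\left(\frac{j+q}{2q}\right)}{\Gamma\left(\frac{j}{2q}\right)\Gamma\left(\frac{j+q+1}{2q}\right)} & \text{if } p \text{ is odd}.\end{cases}$$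
   Context: $\gamma(z)=\sum_{n=1}^{\infty} z^{n-1}\left(\frac{1}{n}-\log\frac{n+1}{n}\right)$ for $|z|\le1$. $\log$ is the principal branch ($-\pi<\mathrm{Arg}\le\pi$), and $\Gamma$ is Euler's gamma function. *)

theory Defs
  imports "HOL-Analysis.Analysis"
begin

text \<open>gamma(z) = sum_{n>=1} z^(n-1) (1/n - log((n+1)/n)), indexed here by n+1 with n from 0.\<close>
definition gamma_fun :: "complex \<Rightarrow> complex" where
  "gamma_fun z = (\<Sum>n. z ^ n * complex_of_real (1 / real (Suc n) - ln (real (Suc (Suc n)) / real (Suc n))))"

definition E_coef :: "nat \<Rightarrow> nat \<Rightarrow> nat \<Rightarrow> real" where
  "E_coef j p q = (if even p
     then ln (Gamma (real (j + 1) / real q) / Gamma (real j / real q))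
     else ln ((Gamma (real (j + 1) / real (2*q)) * Gamma (real (j + q) / real (2*q))) /
              (Gamma (real j / real (2*q)) * Gamma (real (j + q + 1) / real (2*q)))))"

end

theory Submission
  imports Defs
begin

(* Write d m = ln ((m + 2) / (m + 1)) (ln_succ_ratio below), so that gamma has coefficients
   1 / (m + 1) - d m. For |w| = 1, w \<noteq> 1 the series of w^m / (m + 1) still converges to
   - Ln (1 - w) / w: the remainder Ln (1 - z) + \<Sum>m<M. z^(m+1) / (m + 1) has derivative
   - z^M / (1 - z), and on the radius from 0 to w the factor 1 / (1 - z) stays bounded. Hence
   gamma w + Ln (1 - w) / w = - \<Sum>m. w^m d m.
   If w^N = 1, the partial sums up to (n + 1) N regroup by residues mod N; since
   \<Sum>i<N. w^i = 0 they become a combination of differences of the partial sums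
   ln_Gamma_series, and in the limit
   gamma w + Ln (1 - w) / w = \<Sum>j=1..N. w^(j-1) ln (Gamma ((j+1)/N) / Gamma (j/N)).
   For \<omega> = exp (i pi p / q) we have \<omega>^q = (-1)^p: the case N = 2q gives the right-hand
   side, the case N = q gives E for even p, and for odd p the 2q-term sum folds onto the q-term
   sum of E because \<omega>^(j+q) = - \<omega>^j. *)

lemma Re_lt_1_if_norm_eq_1:
  fixes w :: complex
  assumes "norm w = 1" "w \<noteq> 1"
  shows "Re w < 1"
proof (rule ccontr)
  assume "\<not> Re w < 1"
  with complex_Re_le_cmod [of w] assms(1) have "Re w = 1" by simp
  moreover have "(Re w)\<^sup>2 + (Im w)\<^sup>2 = 1"
    using assms(1) by (simp add: cmod_def)
  ultimately have "Im w = 0" by simp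
  with \<open>Re w = 1\<close> assms(2) show False by (simp add: complex_eq_iff)
qed

definition Ln_remainder :: "nat \<Rightarrow> complex \<Rightarrow> complex" where
  "Ln_remainder M z = Ln (1 - z) + (\<Sum>m<M. z ^ Suc m / of_nat (Suc m))"

lemma has_field_derivative_Ln_remainder:
  assumes "1 - z \<notin> \<real>\<^sub>\<le>\<^sub>0"
  shows "(Ln_remainder M has_field_derivative - (z ^ M) / (1 - z)) (at z)"
proof -
  have "z \<noteq> 1" using assms by auto
  have "((\<lambda>z. Ln (1 - z)) has_field_derivative inverse (1 - z) * (- 1)) (at z)"
    using assms by (auto intro!: derivative_eq_intros)
  moreover have "((\<lambda>z. z ^ Suc m / of_nat (Suc m)) has_field_derivative z ^ m) (at z)" for m
    by (rule derivative_eq_intros refl | simp del: of_nat_Suc)+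
  ultimately have "(Ln_remainder M has_field_derivative inverse (1 - z) * (- 1) + (\<Sum>m<M. z ^ m)) (at z)"
    unfolding Ln_remainder_def [abs_def] by (intro DERIV_add DERIV_sum)
  moreover have "inverse (1 - z) * (- 1) + (\<Sum>m<M. z ^ m) = - (z ^ M) / (1 - z)"
    using \<open>z \<noteq> 1\<close>
    by (simp add: sum_gp_strict inverse_eq_divide diff_divide_distrib [symmetric])
  ultimately show ?thesis by simp
qed

lemma Re_one_minus_scaled_ge:
  fixes w :: complex and u :: real
  assumes "0 \<le> u" "u \<le> 1"
  shows "1 - max 0 (Re w) \<le> Re (1 - of_real u * w)"
  using assms mult_left_le_one_le [of "Re w" u] mult_nonneg_nonpos [of u "Re w"]
  by (cases "Re w \<ge> 0") auto

lemma norm_Ln_remainder_diff_le: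
  fixes w :: complex
  assumes w: "norm w = 1" "w \<noteq> 1" and st: "0 \<le> s" "s \<le> t" "t \<le> 1"
  shows "norm (Ln_remainder M (of_real t * w) - Ln_remainder M (of_real s * w))
           \<le> t ^ M / (1 - max 0 (Re w)) * (t - s)"
proof -
  define \<delta> where "\<delta> = 1 - max 0 (Re w)"
  have "\<delta> > 0" using Re_lt_1_if_norm_eq_1 [OF w] by (simp add: \<delta>_def)
  define S where "S = (\<lambda>u. u *\<^sub>R w) ` {s..t}"
  have "convex S" unfolding S_def by (intro convex_scaled convex_real_interval)
  have deriv_bound: "1 - z \<notin> \<real>\<^sub>\<le>\<^sub>0 \<and> norm (- (z ^ M) / (1 - z)) \<le> t ^ M / \<delta>"
    if z: "z \<in> S" for z
  proof -
    obtain u where u: "s \<le> u" "u \<le> t" "z = of_real u * w"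
      using z by (auto simp: S_def scaleR_conv_of_real)
    have "\<delta> \<le> Re (1 - z)"
      unfolding \<delta>_def u(3) using Re_one_minus_scaled_ge u st by auto
    then have "1 - z \<notin> \<real>\<^sub>\<le>\<^sub>0" "\<delta> \<le> norm (1 - z)"
      using \<open>\<delta> > 0\<close> complex_Re_le_cmod [of "1 - z"] by (auto simp: complex_nonpos_Reals_iff)
    moreover have "norm (z ^ M) \<le> t ^ M"
      using u st w by (simp add: norm_mult norm_power power_mono)
    ultimately show ?thesis
      using \<open>\<delta> > 0\<close> st by (auto simp: norm_divide intro!: frac_le)
  qed
  have "norm (Ln_remainder M (of_real t * w) - Ln_remainder M (of_real s * w))
          \<le> t ^ M / \<delta> * norm (of_real t * w - of_real s * w)"
  proof (rule field_differentiable_bound [OF \<open>convex S\<close>,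
                where f' = "\<lambda>z. - (z ^ M) / (1 - z)"])
    fix z assume "z \<in> S"
    then show "(Ln_remainder M has_field_derivative - (z ^ M) / (1 - z)) (at z within S)"
      using deriv_bound by (blast intro: has_field_derivative_at_within has_field_derivative_Ln_remainder)
    show "norm (- (z ^ M) / (1 - z)) \<le> t ^ M / \<delta>"
      using deriv_bound \<open>z \<in> S\<close> by blast
  qed (use st in \<open>auto simp: S_def scaleR_conv_of_real\<close>)
  also have "norm (of_real t * w - of_real s * w) = t - s"
    using w st by (simp add: left_diff_distrib [symmetric] norm_mult flip: of_real_diff)
  finally show ?thesis by (simp add: \<delta>_def)
qed

lemma Ln_remainder_LIMSEQ:
  fixes w :: complex
  assumes w: "norm w = 1" "w \<noteq> 1"
  shows "(\<lambda>M. Ln_remainder M w) \<longlonglongrightarrow> 0"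
proof -
  define \<delta> where "\<delta> = 1 - max 0 (Re w)"
  have "\<delta> > 0" using Re_lt_1_if_norm_eq_1 [OF w] by (simp add: \<delta>_def)
  have bound: "norm (Ln_remainder M w) \<le> r ^ M / \<delta> + (1 - r) / \<delta>"
    if r: "0 \<le> r" "r \<le> 1" for r M
  proof -
    let ?R = "\<lambda>u. Ln_remainder M (of_real u * w)"
    have "norm (Ln_remainder M w) \<le> norm (?R 1 - ?R r) + norm (?R r - ?R 0)"
      using norm_triangle_ineq [of "?R 1 - ?R r" "?R r - ?R 0"] by (simp add: Ln_remainder_def)
    also have "\<dots> \<le> 1 ^ M / \<delta> * (1 - r) + r ^ M / \<delta> * (r - 0)"
      using r by (intro add_mono norm_Ln_remainder_diff_le [OF w, folded \<delta>_def]) auto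
    also have "\<dots> \<le> r ^ M / \<delta> + (1 - r) / \<delta>"
      using r \<open>\<delta> > 0\<close> by (simp add: mult_left_le divide_right_mono)
    finally show ?thesis .
  qed
  show ?thesis
  proof (rule tendstoI)
    fix \<epsilon> :: real assume "\<epsilon> > 0"
    define r where "r = max 0 (1 - \<epsilon> * \<delta> / 2)"
    have r: "0 \<le> r" "r < 1" "(1 - r) / \<delta> \<le> \<epsilon> / 2"
      using \<open>\<epsilon> > 0\<close> \<open>\<delta> > 0\<close> by (auto simp: r_def max_def field_simps)
    have "(\<lambda>M. r ^ M / \<delta>) \<longlonglongrightarrow> 0"
      using r by (intro tendsto_divide_zero LIMSEQ_power_zero) auto
    then have "eventually (\<lambda>M. r ^ M / \<delta> < \<epsilon> / 2) sequentially"
      by (rule order_tendstoD(2)) (use \<open>\<epsilon> > 0\<close> in simp)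
    then show "eventually (\<lambda>M. dist (Ln_remainder M w) 0 < \<epsilon>) sequentially"
    proof eventually_elim
      case (elim M)
      have "norm (Ln_remainder M w) \<le> r ^ M / \<delta> + (1 - r) / \<delta>"
        using bound r by simp
      with elim r(3) show ?case
        unfolding dist_norm diff_zero by linarith
    qed
  qed
qed

lemma Ln_series_boundary:
  fixes w :: complex
  assumes "norm w = 1" "w \<noteq> 1"
  shows "(\<lambda>m. w ^ Suc m / of_nat (Suc m)) sums - Ln (1 - w)"
proof -
  have "(\<lambda>M. Ln_remainder M w - Ln (1 - w)) \<longlonglongrightarrow> 0 - Ln (1 - w)"
    using Ln_remainder_LIMSEQ [OF assms] by (intro tendsto_diff tendsto_const)
  then show ?thesis by (simp add: sums_def Ln_remainder_def)
qed

definition ln_succ_ratio :: "nat \<Rightarrow> real" where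
  "ln_succ_ratio m = ln (real (Suc (Suc m)) / real (Suc m))"

lemma summable_gamma_fun:
  fixes z :: complex
  assumes "norm z \<le> 1"
  shows "summable (\<lambda>n. z ^ n * complex_of_real (1 / real (Suc n) - ln_succ_ratio n))"
proof (rule summable_comparison_test')
  let ?c = "\<lambda>n. 1 / real (Suc n) - ln_succ_ratio n"
  have "?c n = inverse (real (n + 1)) + ln (real (n + 1)) - ln (real (n + 2))" for n
    by (simp add: ln_succ_ratio_def ln_div inverse_eq_divide)
  then show "summable ?c"
    using sums_summable [OF euler_mascheroni_sum_real] by simp
  fix n
  have "real (Suc (Suc n)) / real (Suc n) = 1 + 1 / real (Suc n)"
    by (simp add: field_simps)
  then have "ln_succ_ratio n \<le> 1 / real (Suc n)"
    using ln_add_one_self_le_self [of "1 / real (Suc n)"] by (simp add: ln_succ_ratio_def)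
  then have "norm (z ^ n * complex_of_real (?c n)) = norm z ^ n * ?c n"
    by (simp only: norm_mult norm_power norm_of_real abs_of_nonneg diff_ge_0_iff_ge)
  then show "norm (z ^ n * complex_of_real (?c n)) \<le> ?c n"
    using assms \<open>ln_succ_ratio n \<le> 1 / real (Suc n)\<close>
    by (simp add: power_le_one mult_left_le_one_le)
qed

lemma gamma_fun_plus_Ln_sums:
  fixes w :: complex
  assumes "norm w = 1" "w \<noteq> 1"
  shows "(\<lambda>m. w ^ m * complex_of_real (ln_succ_ratio m)) sums - (gamma_fun w + Ln (1 - w) / w)"
proof -
  have "w \<noteq> 0" using assms by auto
  have "(\<lambda>m. w ^ Suc m / of_nat (Suc m) / w) sums (- Ln (1 - w) / w)"
    using Ln_series_boundary [OF assms] by (rule sums_divide)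
  then have log: "(\<lambda>m. w ^ m / of_nat (Suc m)) sums (- Ln (1 - w) / w)"
    using \<open>w \<noteq> 0\<close> by simp
  have gamma: "(\<lambda>m. w ^ m * complex_of_real (1 / real (Suc m) - ln_succ_ratio m)) sums gamma_fun w"
    using summable_sums [OF summable_gamma_fun [of w]] assms
    by (simp add: gamma_fun_def ln_succ_ratio_def)
  have "(\<lambda>m. w ^ m / of_nat (Suc m) - w ^ m * complex_of_real (1 / real (Suc m) - ln_succ_ratio m))
      sums (- Ln (1 - w) / w - gamma_fun w)"
    by (rule sums_diff [OF log gamma])
  also have "(\<lambda>m. w ^ m / of_nat (Suc m) - w ^ m * complex_of_real (1 / real (Suc m) - ln_succ_ratio m))
      = (\<lambda>m. w ^ m * complex_of_real (ln_succ_ratio m))"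
    by (simp add: right_diff_distrib)
  also have "- Ln (1 - w) / w - gamma_fun w = - (gamma_fun w + Ln (1 - w) / w)"
    by (simp add: algebra_simps)
  finally show ?thesis .
qed

lemma ln_Gamma_series_diff_eq:
  assumes "N > 0"
  shows "ln_Gamma_series (real (i + 2) / real N) n - ln_Gamma_series (real (i + 1) / real N) n
       = ln (real n) / real N - (\<Sum>k\<le>n. ln_succ_ratio (k * N + i))"
proof -
  have step: "ln (real (i + 2) / real N / real k + 1) - ln (real (i + 1) / real N / real k + 1)
      = ln_succ_ratio (k * N + i)" if "k \<ge> 1" for k
  proof -
    have "real (i + 2) / real N / real k + 1 = real (Suc (Suc (k * N + i))) / real (k * N)"
         "real (i + 1) / real N / real k + 1 = real (Suc (k * N + i)) / real (k * N)"
      using that assms by (simp_all add: field_simps)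
    then show ?thesis
      using that assms by (simp add: ln_succ_ratio_def ln_div del: of_nat_Suc)
  qed
  have "(\<Sum>k\<le>n. ln_succ_ratio (k * N + i)) = ln_succ_ratio i + (\<Sum>k=1..n. ln_succ_ratio (k * N + i))"
    by (simp add: atMost_atLeast0 sum.atLeast_Suc_atMost)
  also have "(\<Sum>k=1..n. ln_succ_ratio (k * N + i))
      = (\<Sum>k=1..n. ln (real (i + 2) / real N / real k + 1))
        - (\<Sum>k=1..n. ln (real (i + 1) / real N / real k + 1))"
    using step by (simp add: sum_subtractf [symmetric])
  also have "ln_succ_ratio i = ln (real (i + 2) / real N) - ln (real (i + 1) / real N)"
    using assms by (simp add: ln_succ_ratio_def ln_div)
  finally have "(\<Sum>k\<le>n. ln_succ_ratio (k * N + i))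
      = ln (real (i + 2) / real N) - ln (real (i + 1) / real N)
        + ((\<Sum>k=1..n. ln (real (i + 2) / real N / real k + 1))
           - (\<Sum>k=1..n. ln (real (i + 1) / real N / real k + 1)))" .
  moreover have "real (i + 2) / real N * ln (real n) - real (i + 1) / real N * ln (real n)
      = ln (real n) / real N"
    by (simp add: left_diff_distrib [symmetric] diff_divide_distrib [symmetric])
  ultimately show ?thesis
    unfolding ln_Gamma_series_def by linarith
qed

lemma sum_periodic_power_regroup:
  fixes w :: "'a :: comm_semiring_1"
  assumes "w ^ N = 1"
  shows "(\<Sum>m < n * N. w ^ m * f m) = (\<Sum>i<N. w ^ i * (\<Sum>k<n. f (k * N + i)))"
proof -
  have "(\<Sum>m < n * N. w ^ m * f m) = (\<Sum>k<n. \<Sum>m\<in>{k * N..<k * N + N}. w ^ m * f m)"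
    by (rule sum.nat_group [symmetric])
  also have "\<dots> = (\<Sum>k<n. \<Sum>i<N. w ^ i * f (k * N + i))"
  proof (rule sum.cong [OF refl])
    fix k
    have "w ^ (k * N + i) = w ^ i" for i
      using assms by (simp add: power_add power_mult mult.commute [of k])
    then show "(\<Sum>m\<in>{k * N..<k * N + N}. w ^ m * f m) = (\<Sum>i<N. w ^ i * f (k * N + i))"
      using sum.shift_bounds_nat_ivl [of "\<lambda>m. w ^ m * f m" 0 "k * N" N]
      by (simp add: atLeast0LessThan add.commute)
  qed
  also have "\<dots> = (\<Sum>i<N. w ^ i * (\<Sum>k<n. f (k * N + i)))"
    by (simp add: sum.swap [of _ "{..<N}"] sum_distrib_left)
  finally show ?thesis .
qed

lemma sum_roots_of_unity_ln_Gamma_series_diff: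
  fixes w :: complex
  assumes "N > 0" "w ^ N = 1" "w \<noteq> 1"
  shows "(\<Sum>i<N. w ^ i * complex_of_real
            (ln_Gamma_series (real (i + 2) / real N) n - ln_Gamma_series (real (i + 1) / real N) n))
       = - (\<Sum>m < Suc n * N. w ^ m * complex_of_real (ln_succ_ratio m))"
proof -
  have "(\<Sum>i<N. w ^ i) = 0"
    using assms by (simp add: sum_gp_strict)
  then have "(\<Sum>i<N. w ^ i * complex_of_real (ln (real n) / real N)) = 0"
    by (simp only: sum_distrib_right [symmetric] mult_zero_left)
  then show ?thesis
    unfolding ln_Gamma_series_diff_eq [OF assms(1)] sum_periodic_power_regroup [OF assms(2)]
    by (simp add: right_diff_distrib sum_subtractf lessThan_Suc_atMost)
qed

lemma ln_Gamma_diff_eq_ln_divide: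
  fixes x y :: real
  assumes "x > 0" "y > 0"
  shows "ln_Gamma x - ln_Gamma y = ln (Gamma x / Gamma y)"
  using assms by (simp add: ln_Gamma_real_pos ln_divide_pos Gamma_real_pos)

lemma gamma_fun_root_of_unity:
  fixes w :: complex
  assumes "N > 0" "w ^ N = 1" "w \<noteq> 1"
  shows "gamma_fun w + Ln (1 - w) / w =
    (\<Sum>j=1..N. w ^ (j - 1) * complex_of_real (ln (Gamma (real (j + 1) / real N) / Gamma (real j / real N))))"
proof -
  have "norm w = 1"
    using power_eq_1_iff [OF assms(2)] assms(1) by simp
  let ?G = "\<lambda>i. w ^ i * complex_of_real
              (ln_Gamma (real (i + 2) / real N) - ln_Gamma (real (i + 1) / real N))"
  let ?S = "\<lambda>M. \<Sum>m<M. w ^ m * complex_of_real (ln_succ_ratio m)"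
  have "filterlim (\<lambda>n. Suc n * N) sequentially sequentially"
    using assms(1) by (intro filterlim_subseq strict_monoI) simp
  then have "(\<lambda>n. ?S (Suc n * N)) \<longlonglongrightarrow> - (gamma_fun w + Ln (1 - w) / w)"
    using gamma_fun_plus_Ln_sums [OF \<open>norm w = 1\<close> assms(3)] unfolding sums_def
    by (rule filterlim_compose [rotated])
  moreover have "(\<lambda>n. ?S (Suc n * N)) \<longlonglongrightarrow> - (\<Sum>i<N. ?G i)"
  proof -
    have "(\<lambda>n. \<Sum>i<N. w ^ i * complex_of_real
             (ln_Gamma_series (real (i + 2) / real N) n - ln_Gamma_series (real (i + 1) / real N) n))
          \<longlonglongrightarrow> (\<Sum>i<N. ?G i)"
      using assms(1) by (intro tendsto_intros ln_Gamma_real_LIMSEQ) auto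
    then show ?thesis
      unfolding sum_roots_of_unity_ln_Gamma_series_diff [OF assms]
      by (rule tendsto_minus_cancel_left [THEN iffD2])
  qed
  ultimately have "- (gamma_fun w + Ln (1 - w) / w) = - (\<Sum>i<N. ?G i)"
    by (rule LIMSEQ_unique)
  then have "gamma_fun w + Ln (1 - w) / w = (\<Sum>i<N. ?G i)"
    by (simp only: neg_equal_iff_equal)
  also have "\<dots> = (\<Sum>j=1..N. w ^ (j - 1) * complex_of_real
                      (ln (Gamma (real (j + 1) / real N) / Gamma (real j / real N))))"
    using assms(1)
    by (simp add: sum.atLeast1_atMost_eq ln_Gamma_diff_eq_ln_divide del: of_nat_Suc)
  finally show ?thesis .
qed

lemma sum_antiperiodic_power_fold:
  fixes w :: "'a :: comm_ring_1"
  assumes "w ^ q = - 1"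
  shows "(\<Sum>j=1..2*q. w ^ (j - 1) * f j) = (\<Sum>j=1..q. w ^ (j - 1) * (f j - f (j + q)))"
proof -
  have "(\<Sum>j=1..2*q. w ^ (j - 1) * f j)
      = (\<Sum>j=1..q. w ^ (j - 1) * f j) + (\<Sum>j=q+1..q+q. w ^ (j - 1) * f j)"
    unfolding mult_2 by (rule sum.ub_add_nat) simp
  also have "(\<Sum>j=q+1..q+q. w ^ (j - 1) * f j) = (\<Sum>j=1..q. w ^ (j + q - 1) * f (j + q))"
    using sum.shift_bounds_cl_nat_ivl [of "\<lambda>j. w ^ (j - 1) * f j" 1 q q] by (simp only: add.commute)
  also have "\<dots> = (\<Sum>j=1..q. - (w ^ (j - 1) * f (j + q)))"
  proof (rule sum.cong [OF refl])
    fix j assume "j \<in> {1..q}"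
    then have "j + q - 1 = (j - 1) + q" by simp
    then show "w ^ (j + q - 1) * f (j + q) = - (w ^ (j - 1) * f (j + q))"
      using assms by (simp only: power_add mult_minus_right mult_minus_left mult_1_right)
  qed
  finally show ?thesis
    by (simp add: sum_negf right_diff_distrib sum_subtractf)
qed

lemma E_coef_odd:
  assumes "odd p" "q > 0" "j > 0"
  shows "E_coef j p q =
           ln (Gamma (real (j + 1) / real (2*q)) / Gamma (real j / real (2*q)))
         - ln (Gamma (real (j + q + 1) / real (2*q)) / Gamma (real (j + q) / real (2*q)))"
  using assms by (simp add: E_coef_def ln_divide_pos ln_mult_pos)

lemma sum_E_coef_odd:
  fixes w :: complex
  assumes "odd p" "q > 0" "w ^ q = - 1"
  shows "(\<Sum>j=1..q. w ^ (j - 1) * complex_of_real (E_coef j p q)) =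
         (\<Sum>j=1..2*q. w ^ (j - 1) * complex_of_real
            (ln (Gamma (real (j + 1) / real (2*q)) / Gamma (real j / real (2*q)))))"
proof -
  have "(\<Sum>j=1..q. w ^ (j - 1) * complex_of_real (E_coef j p q))
      = (\<Sum>j=1..q. w ^ (j - 1) * complex_of_real
           (ln (Gamma (real (j + 1) / real (2*q)) / Gamma (real j / real (2*q)))
            - ln (Gamma (real (j + q + 1) / real (2*q)) / Gamma (real (j + q) / real (2*q)))))"
    using assms(1,2) by (intro sum.cong refl) (simp add: E_coef_odd)
  also have "\<dots> = (\<Sum>j=1..2*q. w ^ (j - 1) * complex_of_real
                     (ln (Gamma (real (j + 1) / real (2*q)) / Gamma (real j / real (2*q)))))"
    using sum_antiperiodic_power_fold [OF assms(3), of "\<lambda>j. complex_of_real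
            (ln (Gamma (real (j + 1) / real (2*q)) / Gamma (real j / real (2*q))))"]
    by (simp only: of_real_diff)
  finally show ?thesis .
qed

lemma power_exp_pi_rational:
  assumes "q > 0"
  shows "exp (\<i> * of_real pi * of_nat p / of_nat q) ^ q = (- 1) ^ p"
proof -
  have "exp (\<i> * of_real pi * of_nat p / of_nat q) ^ q = exp (of_nat p * (\<i> * of_real pi))"
    using assms by (simp add: field_simps flip: exp_of_nat_mult)
  then show ?thesis
    by (simp add: exp_of_nat_mult)
qed

theorem theorem29:
  fixes p q :: nat and \<omega> :: complex
  assumes "p > 0" "q > 0" "coprime p q"
    and "\<omega> = exp (\<i> * of_real pi * of_nat p / of_nat q)"
    and "\<omega> \<noteq> 1"
  shows "gamma_fun \<omega> + Ln (1 - \<omega>) / \<omega> = (\<Sum>j=1..q. \<omega> ^ (j - 1) * complex_of_real (E_coef j p q)) \<and>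
         (\<Sum>j=1..q. \<omega> ^ (j - 1) * complex_of_real (E_coef j p q)) =
         (\<Sum>j=1..2*q. \<omega> ^ (j - 1) * complex_of_real
            (ln (Gamma (real (j + 1) / real (2*q)) / Gamma (real j / real (2*q)))))"
proof -
  have \<omega>_pow_q: "\<omega> ^ q = (- 1) ^ p"
    using assms(2,4) by (simp add: power_exp_pi_rational)
  then have "\<omega> ^ (2 * q) = 1"
    by (metis power_mult mult.commute power_minus1_even)
  then have gamma_2q: "gamma_fun \<omega> + Ln (1 - \<omega>) / \<omega> =
      (\<Sum>j=1..2*q. \<omega> ^ (j - 1) * complex_of_real
         (ln (Gamma (real (j + 1) / real (2*q)) / Gamma (real j / real (2*q)))))"
    using assms(2,5) by (intro gamma_fun_root_of_unity) auto
  moreover have "gamma_fun \<omega> + Ln (1 - \<omega>) / \<omega> =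
      (\<Sum>j=1..q. \<omega> ^ (j - 1) * complex_of_real (E_coef j p q))"
  proof (cases "even p")
    case True
    then have "\<omega> ^ q = 1" using \<omega>_pow_q by simp
    then show ?thesis
      using gamma_fun_root_of_unity [OF assms(2) _ assms(5)] True by (simp add: E_coef_def)
  next
    case False
    then have "\<omega> ^ q = - 1" using \<omega>_pow_q by simp
    show ?thesis
      unfolding sum_E_coef_odd [OF False assms(2) \<open>\<omega> ^ q = - 1\<close>] by (rule gamma_2q)
  qed
  ultimately show ?thesis by simp
qed

end
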